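(* If the bornological \(V\)-module \(M\) is complete, then so is \(M'\).
   Context: Let \(V\) be a complete discrete valuation ring with uniformiser \(\pi\). A bornology on a set is a collection of subsets (called bounded) containing all finite subsets and closed under finite unions and under taking subsets. A bornological \(V\)-module is a \(V\)-module \(M\) with a bornology such that every bounded subset is contained in a bounded \(V\)-submodule. It is complete if every bounded subset is contained in a bounded \(V\)-submodule which is \(\pi\)-adically complete. A subset \(S\subseteq M\) is compactoid if there is a bounded \(V\)-submodule \(T\subseteq M\) with \(S\subseteq T\) such that for every \(n\in\mathbb N\) there is a finite set \(F_n\subseteq T\) with \(S\subseteq VF_n+\pi^nT\). \(M'\) denotes \(M\) with the bornology consisting of the compactoid subsets. *)

theory Defs
  imports Complex_Main
begin

definition dvr_uniformiser :: "'v::idom \<Rightarrow> bool" where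
  "dvr_uniformiser \<pi> \<longleftrightarrow> \<pi> \<noteq> 0 \<and> \<not> \<pi> dvd 1 \<and>
     (\<forall>x. x \<noteq> 0 \<longrightarrow> (\<exists>u n. u dvd 1 \<and> x = u * \<pi> ^ n))"

definition pi_adically_complete ::
  "('v::comm_ring_1 \<Rightarrow> 'm::ab_group_add \<Rightarrow> 'm) \<Rightarrow> 'v \<Rightarrow> 'm set \<Rightarrow> bool" where
  "pi_adically_complete s \<pi> T \<longleftrightarrow>
     (\<Inter>n. s (\<pi> ^ n) ` T) = {0} \<and>
     (\<forall>x :: nat \<Rightarrow> 'm. (\<forall>n. x n \<in> T) \<and> (\<forall>n. x (Suc n) - x n \<in> s (\<pi> ^ n) ` T) \<longrightarrow>
        (\<exists>y\<in>T. \<forall>n. y - x n \<in> s (\<pi> ^ n) ` T))"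

definition complete_dvr :: "'v::idom \<Rightarrow> bool" where
  "complete_dvr \<pi> \<longleftrightarrow> dvr_uniformiser \<pi> \<and> pi_adically_complete (*) \<pi> (UNIV :: 'v set)"

definition bornology :: "'a set set \<Rightarrow> bool" where
  "bornology B \<longleftrightarrow> (\<forall>F. finite F \<longrightarrow> F \<in> B) \<and> (\<forall>S\<in>B. \<forall>S'\<in>B. S \<union> S' \<in> B) \<and>
     (\<forall>S\<in>B. \<forall>S'. S' \<subseteq> S \<longrightarrow> S' \<in> B)"

definition bornological_module ::
  "('v::comm_ring_1 \<Rightarrow> 'm::ab_group_add \<Rightarrow> 'm) \<Rightarrow> 'm set set \<Rightarrow> bool" where
  "bornological_module s B \<longleftrightarrow> module s \<and> bornology B \<and>
     (\<forall>S\<in>B. \<exists>T\<in>B. module.subspace s T \<and> S \<subseteq> T)"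

definition complete_bornological_module ::
  "('v::comm_ring_1 \<Rightarrow> 'm::ab_group_add \<Rightarrow> 'm) \<Rightarrow> 'v \<Rightarrow> 'm set set \<Rightarrow> bool" where
  "complete_bornological_module s \<pi> B \<longleftrightarrow> bornological_module s B \<and>
     (\<forall>S\<in>B. \<exists>T\<in>B. module.subspace s T \<and> S \<subseteq> T \<and> pi_adically_complete s \<pi> T)"

definition compactoid ::
  "('v::comm_ring_1 \<Rightarrow> 'm::ab_group_add \<Rightarrow> 'm) \<Rightarrow> 'v \<Rightarrow> 'm set set \<Rightarrow> 'm set \<Rightarrow> bool" where
  "compactoid s \<pi> B S \<longleftrightarrow>
     (\<exists>T\<in>B. module.subspace s T \<and> S \<subseteq> T \<and>
        (\<forall>n::nat. \<exists>F. finite F \<and> F \<subseteq> T \<and>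
           S \<subseteq> {a + b | a b. a \<in> module.span s F \<and> b \<in> s (\<pi> ^ n) ` T}))"

text \<open>The bornology of M': the compactoid subsets.\<close>
definition compactoid_bornology ::
  "('v::comm_ring_1 \<Rightarrow> 'm::ab_group_add \<Rightarrow> 'm) \<Rightarrow> 'v \<Rightarrow> 'm set set \<Rightarrow> 'm set set" where
  "compactoid_bornology s \<pi> B = {S. compactoid s \<pi> B S}"

end

theory Submission
  imports Defs "HOL-Library.Set_Algebras"
begin

text \<open>Let S \<subseteq> T be compactoid, with S \<subseteq> V F_n + \<pi>^n T for finite sets F_n, and let W \<supseteq> T
be a bounded \<pi>-adically complete submodule. Then T' = {x \<in> W. \<forall>n. x \<in> V F_n + \<pi>^n W} is a
submodule containing S, compactoid by the same F_n, and \<pi>-adically closed in W. A closed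
submodule T' of a complete W is complete: the limit in W of a Cauchy sequence in T' lies in T',
and so do the sums of the series \<Sum>_j \<pi>^j t_j with t_j \<in> T', which shows that the tails
lie in \<pi>^n T' and not merely in \<pi>^n W.\<close>

definition pi_adically_closed ::
  "('v::comm_ring_1 \<Rightarrow> 'm::ab_group_add \<Rightarrow> 'm) \<Rightarrow> 'v \<Rightarrow> 'm set \<Rightarrow> 'm set \<Rightarrow> bool" where
  "pi_adically_closed s \<pi> W T \<longleftrightarrow>
     (\<forall>z\<in>W. (\<forall>n. \<exists>w\<in>T. z - w \<in> s (\<pi> ^ n) ` W) \<longrightarrow> z \<in> T)"

lemma pi_adically_closedD:
  assumes "pi_adically_closed s \<pi> W T" and "z \<in> W"
    and "\<And>n. w n \<in> T" and "\<And>n. z - w n \<in> s (\<pi> ^ n) ` W"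
  shows "z \<in> T"
  using assms unfolding pi_adically_closed_def by blast

lemma pi_adically_complete_limit:
  assumes "pi_adically_complete s \<pi> T"
    and "\<And>n. x n \<in> T" and "\<And>n. x (Suc n) - x n \<in> s (\<pi> ^ n) ` T"
  obtains y where "y \<in> T" and "\<And>n. y - x n \<in> s (\<pi> ^ n) ` T"
  using assms unfolding pi_adically_complete_def by blast

lemma pi_adically_complete_eq_0:
  assumes "pi_adically_complete s \<pi> T" and "\<And>n. d \<in> s (\<pi> ^ n) ` T"
  shows "d = 0"
  using assms unfolding pi_adically_complete_def by blast

lemma compactoid_iff:
  "compactoid s \<pi> B S \<longleftrightarrow>
     (\<exists>T\<in>B. module.subspace s T \<and> S \<subseteq> T \<and>
        (\<forall>n::nat. \<exists>F. finite F \<and> F \<subseteq> T \<and> S \<subseteq> module.span s F + s (\<pi> ^ n) ` T))"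
proof -
  have "{a + b |a b. a \<in> A \<and> b \<in> C} = A + C" for A C :: "'b set"
    by (auto simp: set_plus_def)
  then show ?thesis by (simp add: compactoid_def)
qed

lemma compactoid_subset:
  assumes "compactoid s \<pi> B S" and "S' \<subseteq> S"
  shows "compactoid s \<pi> B S'"
proof -
  from assms(1) obtain T where "T \<in> B" "module.subspace s T" "S \<subseteq> T"
    and "\<forall>n::nat. \<exists>F. finite F \<and> F \<subseteq> T \<and> S \<subseteq> module.span s F + s (\<pi> ^ n) ` T"
    unfolding compactoid_iff by blast
  with assms(2) show ?thesis
    unfolding compactoid_iff by (meson subset_trans)
qed

context module
begin

lemma subspace_scale_image: "subspace W \<Longrightarrow> subspace (scale c ` W)"
  by (rule module_hom.subspace_image[OF module_hom_scale_self])


lemma subspace_set_plus: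
  assumes "subspace A" and "subspace C"
  shows "subspace (A + C)"
proof (rule subspaceI)
  show "0 \<in> A + C"
    using set_plus_intro[OF subspace_0[OF assms(1)] subspace_0[OF assms(2)]] by simp
next
  fix x y assume "x \<in> A + C" "y \<in> A + C"
  then obtain a c a' c' where "x = a + c" "y = a' + c'" "a \<in> A" "c \<in> C" "a' \<in> A" "c' \<in> C"
    by (auto elim!: set_plus_elim)
  then have "x + y = (a + a') + (c + c')" "a + a' \<in> A" "c + c' \<in> C"
    using assms subspace_add by (simp_all add: add_ac)
  then show "x + y \<in> A + C"
    by (simp add: set_plus_intro)
next
  fix k x assume "x \<in> A + C"
  then obtain a c where "x = a + c" "a \<in> A" "c \<in> C"
    by (auto elim!: set_plus_elim)
  then show "scale k x \<in> A + C"
    using assms subspace_scale by (simp add: scale_right_distrib set_plus_intro)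
qed

lemma scale_power_image_antimono:
  assumes "subspace W" and "m \<le> n"
  shows "scale (p ^ n) ` W \<subseteq> scale (p ^ m) ` W"
proof
  fix x assume "x \<in> scale (p ^ n) ` W"
  then obtain u where "u \<in> W" "x = scale (p ^ n) u" by blast
  then have "x = scale (p ^ m) (scale (p ^ (n - m)) u)"
    using assms(2) by (simp flip: power_add)
  with assms(1) \<open>u \<in> W\<close> show "x \<in> scale (p ^ m) ` W"
    by (blast intro: subspace_scale)
qed

lemma compactoid_finite:
  assumes "bornological_module scale B" and "finite F"
  shows "compactoid scale p B F"
proof -
  from assms have "F \<in> B" and "\<forall>S\<in>B. \<exists>T\<in>B. subspace T \<and> S \<subseteq> T"
    unfolding bornological_module_def bornology_def by simp_all
  then obtain T where "T \<in> B" "subspace T" "F \<subseteq> T"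
    by blast
  moreover have "F \<subseteq> span F + scale (p ^ n) ` T" for n
  proof
    fix x assume "x \<in> F"
    have "0 \<in> scale (p ^ n) ` T"
      using subspace_0[OF subspace_scale_image[OF \<open>subspace T\<close>]] .
    with \<open>x \<in> F\<close> have "x + 0 \<in> span F + scale (p ^ n) ` T"
      by (intro set_plus_intro span_base)
    then show "x \<in> span F + scale (p ^ n) ` T" by simp
  qed
  ultimately show ?thesis
    using \<open>finite F\<close> unfolding compactoid_iff by blast
qed

lemma compactoid_Un:
  assumes B: "bornological_module scale B"
    and "compactoid scale p B S" and "compactoid scale p B S'"
  shows "compactoid scale p B (S \<union> S')"
proof -
  from assms(2) obtain T where "T \<in> B" "subspace T" "S \<subseteq> T"
    and F: "\<And>n. \<exists>F. finite F \<and> F \<subseteq> T \<and> S \<subseteq> span F + scale (p ^ n) ` T"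
    unfolding compactoid_iff by blast
  from assms(3) obtain T' where "T' \<in> B" "subspace T'" "S' \<subseteq> T'"
    and F': "\<And>n. \<exists>F. finite F \<and> F \<subseteq> T' \<and> S' \<subseteq> span F + scale (p ^ n) ` T'"
    unfolding compactoid_iff by blast
  from B \<open>T \<in> B\<close> \<open>T' \<in> B\<close> have "T \<union> T' \<in> B" and "\<forall>S\<in>B. \<exists>U\<in>B. subspace U \<and> S \<subseteq> U"
    unfolding bornological_module_def bornology_def by simp_all
  then obtain U where U: "U \<in> B" "subspace U" "T \<union> T' \<subseteq> U"
    by blast
  have "\<exists>G. finite G \<and> G \<subseteq> U \<and> S \<union> S' \<subseteq> span G + scale (p ^ n) ` U" for n
  proof -
    from F[of n] F'[of n] obtain G G' where
      "finite G" "G \<subseteq> T" "S \<subseteq> span G + scale (p ^ n) ` T" and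
      "finite G'" "G' \<subseteq> T'" "S' \<subseteq> span G' + scale (p ^ n) ` T'"
      by blast
    moreover have "span G + scale (p ^ n) ` T \<subseteq> span (G \<union> G') + scale (p ^ n) ` U"
      and "span G' + scale (p ^ n) ` T' \<subseteq> span (G \<union> G') + scale (p ^ n) ` U"
      using U(3) by (intro set_plus_mono2 span_mono image_mono; blast)+
    ultimately show ?thesis
      using U(3) by (intro exI[of _ "G \<union> G'"]) auto
  qed
  with U \<open>S \<subseteq> T\<close> \<open>S' \<subseteq> T'\<close> show ?thesis
    unfolding compactoid_iff by blast
qed

lemma bornology_compactoid_bornology:
  assumes "bornological_module scale B"
  shows "bornology (compactoid_bornology scale p B)"
  unfolding bornology_def compactoid_bornology_def mem_Collect_eq
  by (intro conjI allI impI ballI)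
     (simp_all add: compactoid_finite[OF assms] compactoid_Un[OF assms] compactoid_subset)

lemma pi_adic_telescope:
  assumes "\<And>n. x (Suc n) - x n = scale (p ^ n) (t n)"
  shows "x (k + m) - x k = scale (p ^ k) (\<Sum>j<m. scale (p ^ j) (t (k + j)))"
proof (induction m)
  case 0
  show ?case by simp
next
  case (Suc m)
  have "x (k + Suc m) - x k = (x (Suc (k + m)) - x (k + m)) + (x (k + m) - x k)"
    by simp
  also have "\<dots> = scale (p ^ (k + m)) (t (k + m)) + scale (p ^ k) (\<Sum>j<m. scale (p ^ j) (t (k + j)))"
    using assms Suc.IH by simp
  also have "\<dots> = scale (p ^ k) (\<Sum>j<Suc m. scale (p ^ j) (t (k + j)))"
    by (simp add: scale_right_distrib power_add add.commute)
  finally show ?case .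
qed

lemma pi_adically_closed_series_limit:
  assumes W: "subspace W" "pi_adically_complete scale p W"
    and T: "subspace T" "T \<subseteq> W" "pi_adically_closed scale p W T"
    and t: "\<And>j. t j \<in> T"
  obtains z where "z \<in> T" and "\<And>m. z - (\<Sum>j<m. scale (p ^ j) (t j)) \<in> scale (p ^ m) ` W"
proof -
  define w where "w m = (\<Sum>j<m. scale (p ^ j) (t j))" for m
  have "w m \<in> T" for m
    unfolding w_def using T(1) t by (intro subspace_sum subspace_scale)
  moreover have "w (Suc m) - w m \<in> scale (p ^ m) ` W" for m
    using t T(2) by (auto simp: w_def)
  ultimately obtain z where "z \<in> W" and z: "\<And>m. z - w m \<in> scale (p ^ m) ` W"
    using pi_adically_complete_limit[OF W(2)] T(2) by blast
  moreover from this have "z \<in> T"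
    using pi_adically_closedD[OF T(3)] \<open>\<And>m. w m \<in> T\<close> by blast
  ultimately show thesis
    using that unfolding w_def by blast
qed

lemma pi_adically_closed_tail:
  assumes W: "subspace W" "pi_adically_complete scale p W"
    and T: "subspace T" "T \<subseteq> W" "pi_adically_closed scale p W T"
    and t: "\<And>n. t n \<in> T" "\<And>n. x (Suc n) - x n = scale (p ^ n) (t n)"
    and y: "\<And>n. y - x n \<in> scale (p ^ n) ` W"
  shows "y - x k \<in> scale (p ^ k) ` T"
proof -
  let ?w = "\<lambda>m. \<Sum>j<m. scale (p ^ j) (t (k + j))"
  obtain z where "z \<in> T" and z: "\<And>m. z - ?w m \<in> scale (p ^ m) ` W"
    using pi_adically_closed_series_limit[OF W T, of "\<lambda>j. t (k + j)"] t(1) by blast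
  have "y - x k - scale (p ^ k) z = 0"
  proof (rule pi_adically_complete_eq_0[OF W(2)])
    fix m
    have "x (k + m) = x k + scale (p ^ k) (?w m)"
      using pi_adic_telescope[OF t(2), of k m] by (simp add: algebra_simps)
    then have "y - x k - scale (p ^ k) z = (y - x (k + m)) - scale (p ^ k) (z - ?w m)"
      by (simp add: algebra_simps)
    also have "\<dots> \<in> scale (p ^ m) ` W"
    proof (rule subspace_diff[OF subspace_scale_image[OF W(1)]])
      show "y - x (k + m) \<in> scale (p ^ m) ` W"
        using y[of "k + m"] scale_power_image_antimono[OF W(1), of m "k + m"] by auto
      show "scale (p ^ k) (z - ?w m) \<in> scale (p ^ m) ` W"
        using subspace_scale[OF subspace_scale_image[OF W(1)] z] .
    qed
    finally show "y - x k - scale (p ^ k) z \<in> scale (p ^ m) ` W" .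
  qed
  then show ?thesis
    using \<open>z \<in> T\<close> by auto
qed

lemma pi_adically_complete_if_closed:
  assumes W: "subspace W" "pi_adically_complete scale p W"
    and T: "subspace T" "T \<subseteq> W" "pi_adically_closed scale p W T"
  shows "pi_adically_complete scale p T"
  unfolding pi_adically_complete_def
proof (intro conjI allI impI)
  have "z = 0" if "z \<in> (\<Inter>n. scale (p ^ n) ` T)" for z
    using that T(2) by (intro pi_adically_complete_eq_0[OF W(2)]) blast
  moreover have "0 \<in> scale (p ^ n) ` T" for n
    using subspace_0[OF subspace_scale_image[OF T(1)]] .
  ultimately show "(\<Inter>n. scale (p ^ n) ` T) = {0}"
    by blast
next
  fix x assume "(\<forall>n. x n \<in> T) \<and> (\<forall>n. x (Suc n) - x n \<in> scale (p ^ n) ` T)"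
  then have x: "\<And>n. x n \<in> T"
    and "\<forall>n. \<exists>u. u \<in> T \<and> x (Suc n) - x n = scale (p ^ n) u"
    by blast+
  then obtain t where t: "\<And>n. t n \<in> T" "\<And>n. x (Suc n) - x n = scale (p ^ n) (t n)"
    by (auto dest!: choice)
  have "\<And>n. x n \<in> W" "\<And>n. x (Suc n) - x n \<in> scale (p ^ n) ` W"
    using x t T(2) by (auto intro!: imageI)
  then obtain y where "y \<in> W" and y: "\<And>n. y - x n \<in> scale (p ^ n) ` W"
    using pi_adically_complete_limit[OF W(2)] by blast
  have "y \<in> T"
    using pi_adically_closedD[OF T(3) \<open>y \<in> W\<close> x y] .
  moreover have "y - x k \<in> scale (p ^ k) ` T" for k
    using pi_adically_closed_tail[OF W T t y] .
  ultimately show "\<exists>y\<in>T. \<forall>n. y - x n \<in> scale (p ^ n) ` T"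
    by blast
qed

lemma pi_adically_closed_Int_set_plus:
  assumes "subspace W" and "\<And>n. subspace (A n)"
  shows "pi_adically_closed scale p W (W \<inter> (\<Inter>n. A n + scale (p ^ n) ` W))"
  unfolding pi_adically_closed_def
proof (intro ballI impI IntI INT_I)
  fix z n
  assume "\<forall>n. \<exists>w\<in>W \<inter> (\<Inter>n. A n + scale (p ^ n) ` W). z - w \<in> scale (p ^ n) ` W"
  then obtain w where w: "w \<in> A n + scale (p ^ n) ` W" and "z - w \<in> scale (p ^ n) ` W"
    by blast
  have sub: "subspace (A n + scale (p ^ n) ` W)"
    by (intro subspace_set_plus subspace_scale_image assms)
  have "scale (p ^ n) ` W \<subseteq> A n + scale (p ^ n) ` W"
    by (rule set_zero_plus2[OF subspace_0[OF assms(2)]])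
  with \<open>z - w \<in> scale (p ^ n) ` W\<close> have "z - w \<in> A n + scale (p ^ n) ` W"
    by blast
  from subspace_add[OF sub w this] show "z \<in> A n + scale (p ^ n) ` W"
    by simp
qed

lemma compactoid_subset_complete_compactoid_subspace:
  assumes B: "complete_bornological_module scale p B" and "compactoid scale p B S"
  obtains T' where "compactoid scale p B T'" and "subspace T'" and "S \<subseteq> T'"
    and "pi_adically_complete scale p T'"
proof -
  from \<open>compactoid scale p B S\<close> obtain T where "T \<in> B" "S \<subseteq> T"
    and "\<forall>n. \<exists>F. finite F \<and> F \<subseteq> T \<and> S \<subseteq> span F + scale (p ^ n) ` T"
    unfolding compactoid_iff by blast
  from choice[OF this(3)] obtain F where
    "\<forall>n. finite (F n) \<and> F n \<subseteq> T \<and> S \<subseteq> span (F n) + scale (p ^ n) ` T"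
    by blast
  then have F: "\<And>n. finite (F n)" "\<And>n. F n \<subseteq> T" "\<And>n. S \<subseteq> span (F n) + scale (p ^ n) ` T"
    by blast+
  from B \<open>T \<in> B\<close> obtain W where W: "W \<in> B" "subspace W" "T \<subseteq> W" "pi_adically_complete scale p W"
    unfolding complete_bornological_module_def by blast
  define T' where "T' = W \<inter> (\<Inter>n. span (F n) + scale (p ^ n) ` W)"
  have "T' \<subseteq> W" and T'_approx: "\<And>n. T' \<subseteq> span (F n) + scale (p ^ n) ` W"
    unfolding T'_def by blast+
  have "subspace T'"
    unfolding T'_def
    by (intro subspace_inter subspace_Int subspace_set_plus subspace_span subspace_scale_image W(2))
  have "S \<subseteq> T'"
  proof -
    have "span (F n) + scale (p ^ n) ` T \<subseteq> span (F n) + scale (p ^ n) ` W" for n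
      using W(3) by (intro set_plus_mono2 order_refl image_mono)
    then show ?thesis
      unfolding T'_def using F(3) \<open>S \<subseteq> T\<close> W(3) by blast
  qed
  have "compactoid scale p B T'"
    unfolding compactoid_iff
  proof (intro bexI[OF _ W(1)] conjI allI W(2) \<open>T' \<subseteq> W\<close>)
    fix n
    have "F n \<subseteq> W"
      using F(2) W(3) by (rule subset_trans)
    then show "\<exists>G. finite G \<and> G \<subseteq> W \<and> T' \<subseteq> span G + scale (p ^ n) ` W"
      by (intro exI[of _ "F n"] conjI F(1) T'_approx)
  qed
  have "pi_adically_complete scale p T'"
  proof (rule pi_adically_complete_if_closed[OF W(2,4) \<open>subspace T'\<close> \<open>T' \<subseteq> W\<close>])
    show "pi_adically_closed scale p W T'"
      unfolding T'_def by (intro pi_adically_closed_Int_set_plus W(2) subspace_span)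
  qed
  show thesis
    by (rule that) fact+
qed

end

theorem lemma4p1:
  fixes s :: "'v::idom \<Rightarrow> 'm::ab_group_add \<Rightarrow> 'm" and \<pi> :: 'v and B :: "'m set set"
  assumes "complete_dvr \<pi>"
    and "complete_bornological_module s \<pi> B"
  shows "complete_bornological_module s \<pi> (compactoid_bornology s \<pi> B)"
proof -
  have B: "bornological_module s B" and "module s"
    using assms(2) unfolding complete_bornological_module_def bornological_module_def by blast+
  interpret module s by fact
  have "\<exists>T\<in>compactoid_bornology s \<pi> B. subspace T \<and> S \<subseteq> T \<and> pi_adically_complete s \<pi> T"
    if "S \<in> compactoid_bornology s \<pi> B" for S
    using compactoid_subset_complete_compactoid_subspace[OF assms(2)] that
    unfolding compactoid_bornology_def by (metis mem_Collect_eq)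
  then show ?thesis
    unfolding complete_bornological_module_def bornological_module_def
    using \<open>module s\<close> bornology_compactoid_bornology[OF B] by blast
qed

end
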